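(* Let $P$ and $Q$ be stochastic matrices over a countable set $\Omega$. Say that $P$ and $Q$ satisfy condition $(\star)$ via a permutation $\sigma$ of $\Omega$ if (a) for all $i,j$, $P_{ij}>0\iff Q_{\sigma(i)\sigma(j)}>0$, and (b) for all $n,m\in\mathbb{N}$ and all $i,j,k\in\Omega$ with $P^{(n)}_{ij}P^{(m)}_{jk}>0$, $$\frac{P^{(n)}_{ij}P^{(m)}_{jk}}{P^{(n+m)}_{ik}}=\frac{Q^{(n)}_{\sigma(i)\sigma(j)}Q^{(m)}_{\sigma(j)\sigma(k)}}{Q^{(n+m)}_{\sigma(i)\sigma(k)}}.$$ Then: (1) if there is a $\rho$-unitary isomorphism $Arv(P)\to Arv(Q)$ for a *-automorphism $\rho$ of $\ell^\infty(\Omega)$, then $P$ and $Q$ satisfy $(\star)$ via $\sigma_\rho$; (2) if $P$ and $Q$ satisfy $(\star)$ via $\sigma$, then there is a $\rho_\sigma$-unitary isomorphism $Arv(P)\to Arv(Q)$.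
   Context: A stochastic matrix over $\Omega$ has nonnegative entries and row sums $1$; $P^{(n)}_{ij}$ is the $(i,j)$ entry of $P^n$ ($P^0=I$). Every *-automorphism $\rho$ of $\ell^\infty(\Omega)$ is of the form $\rho_\sigma(f)=f\circ\sigma^{-1}$ for a unique permutation $\sigma$; $\sigma_\rho$ denotes the permutation with $\rho(p_j)=p_{\sigma_\rho(j)}$, $p_j$ the indicator of $\{j\}$. $Arv(P)$: $Arv(P)_0=\ell^\infty(\Omega)$; $Arv(P)_n$ ($n\ge1$) is the set of complex $\Omega\times\Omega$ matrices $A=[a_{ij}]$ with $a_{ij}=0$ whenever $P^{(n)}_{ij}=0$ and $\sup_j\sum_i|a_{ij}|^2<\infty$, a W*-correspondence over $\ell^\infty(\Omega)$ with actions by multiplication by diagonal matrices and inner product $\mathrm{Diag}(A^*B)$; $U^P_{n,m}(A\otimes B)=(\sqrt{P^{n+m}})^{\flat}*[(\sqrt{P^n}*A)(\sqrt{P^m}*B)]$ for $n,m\ge1$ ($*$ entrywise product, $\sqrt\cdot$ entrywise, $M^\flat_{ik}=M_{ik}^{-1}$ if $M_{ik}>0$, else $0$), $U_{0,n},U_{n,0}$ module actions. A $\rho$-unitary isomorphism $V:Arv(P)\to Arv(Q)$ is a family $(V_n)_{n\ge0}$ with $V_0=\rho$ and, for $n\ge1$, $V_n:Arv(P)_n\to Arv(Q)_n$ surjective linear with $V_n(a\xi b)=\rho(a)V_n(\xi)\rho(b)$ and $\rho^{-1}(\langle V_n\xi,V_n\eta\rangle)=\langle\xi,\eta\rangle$,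 such that $V_{n+m}U^P_{n,m}=U^Q_{n,m}(V_n\otimes V_m)$ for all $n,m$. *)

theory Defs
  imports "HOL-Analysis.Analysis"
begin

definition stochastic :: "('a \<Rightarrow> 'a \<Rightarrow> real) \<Rightarrow> bool" where
  "stochastic P \<longleftrightarrow> (\<forall>i j. P i j \<ge> 0) \<and> (\<forall>i. ((\<lambda>j. P i j) has_sum 1) UNIV)"

fun mpow :: "('a \<Rightarrow> 'a \<Rightarrow> real) \<Rightarrow> nat \<Rightarrow> 'a \<Rightarrow> 'a \<Rightarrow> real" where
  "mpow P 0 = (\<lambda>i j. if i = j then 1 else 0)"
| "mpow P (Suc n) = (\<lambda>i k. infsum (\<lambda>j. mpow P n i j * P j k) UNIV)"

definition linf :: "('a \<Rightarrow> complex) set" where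
  "linf = {f. bdd_above (range (\<lambda>x. cmod (f x)))}"

definition star_aut :: "(('a \<Rightarrow> complex) \<Rightarrow> ('a \<Rightarrow> complex)) \<Rightarrow> bool" where
  "star_aut \<rho> \<longleftrightarrow> bij_betw \<rho> linf linf
     \<and> (\<forall>f\<in>linf. \<forall>g\<in>linf. \<rho> (\<lambda>x. f x + g x) = (\<lambda>x. \<rho> f x + \<rho> g x))
     \<and> (\<forall>f\<in>linf. \<forall>c. \<rho> (\<lambda>x. c * f x) = (\<lambda>x. c * \<rho> f x))
     \<and> (\<forall>f\<in>linf. \<forall>g\<in>linf. \<rho> (\<lambda>x. f x * g x) = (\<lambda>x. \<rho> f x * \<rho> g x))
     \<and> (\<forall>f\<in>linf. \<rho> (\<lambda>x. cnj (f x)) = (\<lambda>x. cnj (\<rho> f x)))"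

definition pj :: "'a \<Rightarrow> 'a \<Rightarrow> complex" where
  "pj j = (\<lambda>x. if x = j then 1 else 0)"

definition sigma_of :: "(('a \<Rightarrow> complex) \<Rightarrow> ('a \<Rightarrow> complex)) \<Rightarrow> 'a \<Rightarrow> 'a" where
  "sigma_of \<rho> j = (THE k. \<rho> (pj j) = pj k)"

definition rho_of :: "('a \<Rightarrow> 'a) \<Rightarrow> ('a \<Rightarrow> complex) \<Rightarrow> ('a \<Rightarrow> complex)" where
  "rho_of \<sigma> f = f \<circ> inv \<sigma>"

definition star_cond :: "('a \<Rightarrow> 'a \<Rightarrow> real) \<Rightarrow> ('a \<Rightarrow> 'a \<Rightarrow> real) \<Rightarrow> ('a \<Rightarrow> 'a) \<Rightarrow> bool" where
  "star_cond P Q \<sigma> \<longleftrightarrow> bij \<sigma>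
     \<and> (\<forall>i j. P i j > 0 \<longleftrightarrow> Q (\<sigma> i) (\<sigma> j) > 0)
     \<and> (\<forall>n m i j k. mpow P n i j * mpow P m j k > 0 \<longrightarrow>
          mpow P n i j * mpow P m j k / mpow P (n + m) i k =
          mpow Q n (\<sigma> i) (\<sigma> j) * mpow Q m (\<sigma> j) (\<sigma> k) / mpow Q (n + m) (\<sigma> i) (\<sigma> k))"

text \<open>The fibre Arv(P)_n for n >= 1.\<close>
definition arv :: "('a \<Rightarrow> 'a \<Rightarrow> real) \<Rightarrow> nat \<Rightarrow> ('a \<Rightarrow> 'a \<Rightarrow> complex) set" where
  "arv P n = {A. (\<forall>i j. mpow P n i j = 0 \<longrightarrow> A i j = 0)
      \<and> (\<forall>j. (\<lambda>i. (cmod (A i j))\<^sup>2) summable_on UNIV)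
      \<and> bdd_above (range (\<lambda>j. infsum (\<lambda>i. (cmod (A i j))\<^sup>2) UNIV))}"

text \<open>Bimodule action a xi b = Diag(a) xi Diag(b).\<close>
definition bimod :: "('a \<Rightarrow> complex) \<Rightarrow> ('a \<Rightarrow> 'a \<Rightarrow> complex) \<Rightarrow> ('a \<Rightarrow> complex) \<Rightarrow> ('a \<Rightarrow> 'a \<Rightarrow> complex)" where
  "bimod a A b = (\<lambda>i j. a i * A i j * b j)"

text \<open>Inner product Diag(A^* B).\<close>
definition arv_ip :: "('a \<Rightarrow> 'a \<Rightarrow> complex) \<Rightarrow> ('a \<Rightarrow> 'a \<Rightarrow> complex) \<Rightarrow> ('a \<Rightarrow> complex)" where
  "arv_ip A B = (\<lambda>j. infsum (\<lambda>i. cnj (A i j) * B i j) UNIV)"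

definition flat :: "real \<Rightarrow> real" where
  "flat x = (if x > 0 then 1 / x else 0)"

definition Umap :: "('a \<Rightarrow> 'a \<Rightarrow> real) \<Rightarrow> nat \<Rightarrow> nat \<Rightarrow> ('a \<Rightarrow> 'a \<Rightarrow> complex) \<Rightarrow> ('a \<Rightarrow> 'a \<Rightarrow> complex) \<Rightarrow> ('a \<Rightarrow> 'a \<Rightarrow> complex)" where
  "Umap P n m A B = (\<lambda>i k. complex_of_real (flat (sqrt (mpow P (n + m) i k))) *
      infsum (\<lambda>j. (complex_of_real (sqrt (mpow P n i j)) * A i j) *
                  (complex_of_real (sqrt (mpow P m j k)) * B j k)) UNIV)"

text \<open>rho-unitary isomorphism Arv(P) -> Arv(Q): V_0 = rho, V n for n >= 1.
  The compatibility with U is required on elementary tensors (which determine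
  the maps on the interior tensor product); the cases n = 0 or m = 0 are the
  bimodule property and multiplicativity of rho.\<close>
definition rho_unitary_iso :: "('a \<Rightarrow> 'a \<Rightarrow> real) \<Rightarrow> ('a \<Rightarrow> 'a \<Rightarrow> real) \<Rightarrow>
    (('a \<Rightarrow> complex) \<Rightarrow> ('a \<Rightarrow> complex)) \<Rightarrow>
    (nat \<Rightarrow> ('a \<Rightarrow> 'a \<Rightarrow> complex) \<Rightarrow> ('a \<Rightarrow> 'a \<Rightarrow> complex)) \<Rightarrow> bool" where
  "rho_unitary_iso P Q \<rho> V \<longleftrightarrow>
     (\<forall>n\<ge>1.
        V n ` arv P n = arv Q n
      \<and> (\<forall>A\<in>arv P n. \<forall>B\<in>arv P n. V n (\<lambda>i j. A i j + B i j) = (\<lambda>i j. V n A i j + V n B i j))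
      \<and> (\<forall>A\<in>arv P n. \<forall>c. V n (\<lambda>i j. c * A i j) = (\<lambda>i j. c * V n A i j))
      \<and> (\<forall>a\<in>linf. \<forall>b\<in>linf. \<forall>A\<in>arv P n. V n (bimod a A b) = bimod (\<rho> a) (V n A) (\<rho> b))
      \<and> (\<forall>A\<in>arv P n. \<forall>B\<in>arv P n. inv_into linf \<rho> (arv_ip (V n A) (V n B)) = arv_ip A B))
   \<and> (\<forall>n\<ge>1. \<forall>m\<ge>1. \<forall>A\<in>arv P n. \<forall>B\<in>arv P m.
        V (n + m) (Umap P n m A B) = Umap Q n m (V n A) (V m B))"

end

theory Submission
  imports Defs
begin

text \<open>A \<open>\<rho>\<close>-unitary isomorphism \<open>V\<close> commutes with the bimodule actions, and \<open>\<rho>\<close> maps the minimal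
  projection \<open>p\<^sub>j\<close> to \<open>p\<^bsub>\<sigma> j\<^esub>\<close>; hence \<open>V\<^sub>n\<close> sends the matrix unit \<open>e\<^bsub>i j\<^esub>\<close> to a multiple of
  \<open>e\<^bsub>\<sigma> i \<sigma> j\<^esub>\<close>, unimodular because \<open>V\<close> preserves inner products. In particular the supports
  of \<open>P\<^sup>n\<close> and \<open>Q\<^sup>n\<close> correspond under \<open>\<sigma>\<close>. Since \<open>U\<^sup>P\<close> maps \<open>e\<^bsub>i j\<^esub> \<otimes> e\<^bsub>j k\<^esub>\<close> to the multiple
  \<open>sqrt (P\<^sup>n\<^bsub>i j\<^esub> P\<^sup>m\<^bsub>j k\<^esub> / P\<^bsup>n+m\<^esup>\<^bsub>i k\<^esub>)\<close> of \<open>e\<^bsub>i k\<^esub>\<close>, comparing moduli in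
  \<open>V U\<^sup>P = U\<^sup>Q (V \<otimes> V)\<close> yields \<open>(\<star>)\<close>. Conversely, under \<open>(\<star>)\<close> relabelling the entries of a
  matrix by \<open>\<sigma>\<close> is a \<open>\<rho>\<^sub>\<sigma>\<close>-unitary isomorphism: it preserves supports, and \<open>(\<star>)\<close> says
  exactly that it preserves the coefficients of \<open>U\<close>.\<close>

lemma has_sum_single_nonzero:
  fixes f :: "'a \<Rightarrow> 'b::{comm_monoid_add,topological_space}"
  assumes "\<And>x. x \<noteq> a \<Longrightarrow> f x = 0"
  shows "(f has_sum f a) UNIV"
  by (rule has_sum_finite_neutralI[of "{a}"]) (use assms in auto)

lemma infsum_single_nonzero:
  fixes f :: "'a \<Rightarrow> 'b::{comm_monoid_add,t2_space}"
  assumes "\<And>x. x \<noteq> a \<Longrightarrow> f x = 0"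
  shows "infsum f UNIV = f a"
  using has_sum_single_nonzero[OF assms] by (rule infsumI)

lemma has_sum_sum:
  fixes g :: "'k \<Rightarrow> 'a \<Rightarrow> 'b::topological_comm_monoid_add"
  assumes "finite F" "\<And>k. k \<in> F \<Longrightarrow> (g k has_sum s k) A"
  shows "((\<lambda>x. \<Sum>k\<in>F. g k x) has_sum (\<Sum>k\<in>F. s k)) A"
  using assms by (induction F rule: finite_induct) (simp_all add: has_sum_add)

section \<open>Stochastic matrices and their powers\<close>

lemma stochastic_nonneg: "stochastic P \<Longrightarrow> P i j \<ge> 0"
  by (simp add: stochastic_def)

lemma stochastic_sum_le_1:
  assumes "stochastic P" "finite F"
  shows "sum (P i) F \<le> 1"
proof -
  have "(P i has_sum 1) UNIV" using assms(1) by (simp add: stochastic_def)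
  then show ?thesis
    by (rule finite_sum_le_has_sum) (use assms stochastic_nonneg in auto)
qed

lemma stochastic_le_1: "stochastic P \<Longrightarrow> P i j \<le> 1"
  using stochastic_sum_le_1[of P "{j}" i] by simp

lemma mpow_nonneg: "stochastic P \<Longrightarrow> mpow P n i j \<ge> 0"
  by (induction n arbitrary: i j) (simp_all add: infsum_nonneg stochastic_nonneg)

lemma mpow_1: "mpow P 1 = P"
proof (intro ext)
  fix i k
  have "mpow P (Suc 0) i k = P i k" by (simp add: infsum_single_nonzero[where a=i])
  then show "mpow P 1 i k = P i k" by simp
qed

lemma mpow_row_summable_le_1:
  assumes P: "stochastic P"
  shows "mpow P n i summable_on UNIV \<and> infsum (mpow P n i) UNIV \<le> 1"
proof (induction n arbitrary: i)
  case 0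
  have "(mpow P 0 i has_sum 1) UNIV"
    using has_sum_single_nonzero[where f="mpow P 0 i" and a=i] by simp
  then show ?case by (simp add: has_sum_iff)
next
  case (Suc n)
  have row: "mpow P n i summable_on UNIV" "infsum (mpow P n i) UNIV \<le> 1"
    using Suc.IH by auto
  have terms: "((\<lambda>j. mpow P n i j * P j k) has_sum mpow P (Suc n) i k) UNIV" for k
  proof -
    have "(\<lambda>j. mpow P n i j * P j k) summable_on UNIV"
      by (rule summable_on_comparison_test[OF row(1)])
         (simp_all add: P mpow_nonneg stochastic_nonneg stochastic_le_1 mult_left_le)
    then show ?thesis by (simp add: has_sum_infsum)
  qed
  have partial: "sum (mpow P (Suc n) i) F \<le> 1" if "finite F" for F
  proof -
    have "((\<lambda>j. \<Sum>k\<in>F. mpow P n i j * P j k) has_sum sum (mpow P (Suc n) i) F) UNIV"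
      by (rule has_sum_sum[OF that terms])
    moreover have "(mpow P n i has_sum infsum (mpow P n i) UNIV) UNIV"
      using row(1) by (simp add: has_sum_infsum)
    moreover have "(\<Sum>k\<in>F. mpow P n i j * P j k) \<le> mpow P n i j" for j
      using mult_left_le[OF stochastic_sum_le_1[OF P that] mpow_nonneg[OF P]]
      by (simp add: sum_distrib_left)
    ultimately have "sum (mpow P (Suc n) i) F \<le> infsum (mpow P n i) UNIV"
      by (rule has_sum_mono)
    with row(2) show ?thesis by linarith
  qed
  have "mpow P (Suc n) i summable_on UNIV"
    by (rule nonneg_bdd_above_summable_on)
       (use partial in \<open>auto simp del: mpow.simps intro!: bdd_aboveI2[where M=1] mpow_nonneg[OF P]\<close>)
  moreover have "infsum (mpow P (Suc n) i) UNIV \<le> 1"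
    by (rule infsum_le_finite_sums[OF calculation]) (use partial in auto)
  ultimately show ?case by blast
qed

lemma mpow_Suc_pos_iff:
  assumes P: "stochastic P"
  shows "mpow P (Suc n) i k > 0 \<longleftrightarrow> (\<exists>j. mpow P n i j > 0 \<and> P j k > 0)"
proof
  assume pos: "mpow P (Suc n) i k > 0"
  show "\<exists>j. mpow P n i j > 0 \<and> P j k > 0"
  proof (rule ccontr)
    assume "\<not> ?thesis"
    then have "mpow P n i j * P j k = 0" for j
      using mpow_nonneg[OF P, of n i j] stochastic_nonneg[OF P, of j k]
      by (metis less_eq_real_def mult_eq_0_iff)
    then have "(\<lambda>j. mpow P n i j * P j k) = (\<lambda>_. 0)" by (intro ext)
    then have "mpow P (Suc n) i k = 0" by simp
    with pos show False by simp
  qed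
next
  assume "\<exists>j. mpow P n i j > 0 \<and> P j k > 0"
  then obtain j where j: "mpow P n i j > 0" "P j k > 0" by blast
  have row: "mpow P n i summable_on UNIV"
    using mpow_row_summable_le_1[OF P] by blast
  have "(\<lambda>j. mpow P n i j * P j k) summable_on UNIV"
    by (rule summable_on_comparison_test[OF row])
       (simp_all add: P mpow_nonneg stochastic_nonneg stochastic_le_1 mult_left_le)
  then have "mpow P n i j * P j k \<le> mpow P (Suc n) i k"
    using finite_sum_le_infsum[of "\<lambda>j. mpow P n i j * P j k" UNIV "{j}"]
    by (simp add: P mpow_nonneg stochastic_nonneg)
  moreover have "mpow P n i j * P j k > 0" using j by simp
  ultimately show "mpow P (Suc n) i k > 0" by linarith
qed

lemma mpow_pos_iff_of_pos_iff:
  assumes P: "stochastic P" and Q: "stochastic Q" and "bij \<sigma>"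
    and supp: "\<And>i j. P i j > 0 \<longleftrightarrow> Q (\<sigma> i) (\<sigma> j) > 0"
  shows "mpow P n i j > 0 \<longleftrightarrow> mpow Q n (\<sigma> i) (\<sigma> j) > 0"
proof (induction n arbitrary: j)
  case 0
  show ?case using bij_is_inj[OF \<open>bij \<sigma>\<close>] by (auto simp: inj_def)
next
  case (Suc n)
  have "(\<exists>l. mpow P n i l > 0 \<and> P l j > 0) \<longleftrightarrow> (\<exists>l. mpow Q n (\<sigma> i) l > 0 \<and> Q l (\<sigma> j) > 0)"
  proof
    assume "\<exists>l. mpow P n i l > 0 \<and> P l j > 0"
    then show "\<exists>l. mpow Q n (\<sigma> i) l > 0 \<and> Q l (\<sigma> j) > 0" using Suc.IH supp by blast
  next
    assume "\<exists>l. mpow Q n (\<sigma> i) l > 0 \<and> Q l (\<sigma> j) > 0"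
    then obtain l where "mpow Q n (\<sigma> i) (\<sigma> (inv \<sigma> l)) > 0" "Q (\<sigma> (inv \<sigma> l)) (\<sigma> j) > 0"
      using bij_inv_eq_iff[OF \<open>bij \<sigma>\<close>] by metis
    then show "\<exists>l. mpow P n i l > 0 \<and> P l j > 0" using Suc.IH supp by blast
  qed
  then show ?case by (simp only: mpow_Suc_pos_iff[OF P] mpow_Suc_pos_iff[OF Q])
qed

section \<open>Matrix units in the fibres of Arv(P)\<close>

definition matrix_unit :: "'a \<Rightarrow> 'a \<Rightarrow> 'a \<Rightarrow> 'a \<Rightarrow> complex" where
  "matrix_unit a b = (\<lambda>i j. if i = a \<and> j = b then 1 else 0)"

lemma zero_in_arv: "(\<lambda>i j. 0) \<in> arv P n"
  by (simp add: arv_def)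

lemma matrix_unit_in_arv:
  assumes "mpow P n a b \<noteq> 0"
  shows "matrix_unit a b \<in> arv P n"
proof -
  have col: "((\<lambda>i. (cmod (matrix_unit a b i j))\<^sup>2) has_sum (cmod (matrix_unit a b a j))\<^sup>2) UNIV"
    for j by (rule has_sum_single_nonzero) (simp add: matrix_unit_def)
  have "(cmod (matrix_unit a b a j))\<^sup>2 \<le> 1" for j
    by (simp add: matrix_unit_def)
  then have "bdd_above (range (\<lambda>j. infsum (\<lambda>i. (cmod (matrix_unit a b i j))\<^sup>2) UNIV))"
    using infsumI[OF col] by (auto intro!: bdd_aboveI[where M=1])
  with col assms show ?thesis
    unfolding arv_def by (auto simp: matrix_unit_def summable_on_def)
qed

lemma arv_reindex:
  assumes "bij f" and supp: "\<And>i j. mpow Q n i j = 0 \<Longrightarrow> mpow P n (f i) (f j) = 0"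
    and A: "A \<in> arv P n"
  shows "(\<lambda>i j. A (f i) (f j)) \<in> arv Q n"
proof -
  have f: "bij_betw f UNIV UNIV" using \<open>bij f\<close> by (simp add: bij_def bij_betw_def)
  have col: "(\<lambda>i. (cmod (A i j))\<^sup>2) summable_on UNIV" for j
    using A by (auto simp: arv_def)
  have bdd: "bdd_above (range (\<lambda>j. infsum (\<lambda>i. (cmod (A i j))\<^sup>2) UNIV))"
    using A by (auto simp: arv_def)
  have col_f: "(\<lambda>i. (cmod (A (f i) (f j)))\<^sup>2) summable_on UNIV" for j
    using summable_on_reindex_bij_betw[OF f, of "\<lambda>i. (cmod (A i (f j)))\<^sup>2"] col by simp
  have "range (\<lambda>j. infsum (\<lambda>i. (cmod (A (f i) (f j)))\<^sup>2) UNIV)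
        \<subseteq> range (\<lambda>j. infsum (\<lambda>i. (cmod (A i j))\<^sup>2) UNIV)"
    using infsum_reindex_bij_betw[OF f, of "\<lambda>i. (cmod (A i (f _)))\<^sup>2"] by auto
  then have "bdd_above (range (\<lambda>j. infsum (\<lambda>i. (cmod (A (f i) (f j)))\<^sup>2) UNIV))"
    by (rule bdd_above_mono[OF bdd])
  with A supp col_f show ?thesis by (auto simp: arv_def)
qed

lemma arv_ip_in_linf:
  assumes A: "A \<in> arv P n" and B: "B \<in> arv P n"
  shows "arv_ip A B \<in> linf"
proof -
  have colA: "(\<lambda>i. (cmod (A i j))\<^sup>2) summable_on UNIV"
    and colB: "(\<lambda>i. (cmod (B i j))\<^sup>2) summable_on UNIV" for j
    using A B by (auto simp: arv_def)
  obtain CA where CA: "\<And>j. infsum (\<lambda>i. (cmod (A i j))\<^sup>2) UNIV \<le> CA"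
    using A by (auto simp: arv_def bdd_above_def)
  obtain CB where CB: "\<And>j. infsum (\<lambda>i. (cmod (B i j))\<^sup>2) UNIV \<le> CB"
    using B by (auto simp: arv_def bdd_above_def)
  have "cmod (arv_ip A B j) \<le> CA + CB" for j
  proof -
    define g where "g i = (cmod (A i j))\<^sup>2 + (cmod (B i j))\<^sup>2" for i
    have g: "g summable_on UNIV"
      unfolding g_def by (intro summable_on_add colA colB)
    have le: "norm (cnj (A i j) * B i j) \<le> g i" for i
    proof -
      have "0 \<le> (cmod (A i j) - cmod (B i j))\<^sup>2" "0 \<le> cmod (A i j) * cmod (B i j)" by simp_all
      then have "cmod (A i j) * cmod (B i j) \<le> g i"
        unfolding g_def power2_diff by linarith
      then show ?thesis by (simp add: norm_mult)
    qed
    have norm_summable: "(\<lambda>i. norm (cnj (A i j) * B i j)) summable_on UNIV"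
      by (rule summable_on_comparison_test[OF g]) (use le in auto)
    have "cmod (arv_ip A B j) \<le> infsum (\<lambda>i. norm (cnj (A i j) * B i j)) UNIV"
      unfolding arv_ip_def by (rule norm_infsum_bound[OF norm_summable])
    also have "\<dots> \<le> infsum g UNIV"
      by (rule infsum_mono[OF norm_summable g le])
    also have "\<dots> = infsum (\<lambda>i. (cmod (A i j))\<^sup>2) UNIV + infsum (\<lambda>i. (cmod (B i j))\<^sup>2) UNIV"
      unfolding g_def by (simp add: infsum_add colA colB)
    also have "\<dots> \<le> CA + CB" using CA CB by (rule add_mono)
    finally show ?thesis .
  qed
  then show ?thesis
    unfolding linf_def by (auto intro!: bdd_aboveI[where M="CA + CB"])
qed

lemma bimod_pj_pj: "bimod (pj a) A (pj b) = (\<lambda>i j. A a b * matrix_unit a b i j)"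
  by (intro ext) (simp add: bimod_def pj_def matrix_unit_def)

lemma bimod_pj_matrix_unit: "bimod (pj a) (matrix_unit a b) (pj b) = matrix_unit a b"
  by (simp add: bimod_pj_pj matrix_unit_def)

lemma flat_sqrt_mult:
  fixes p x y :: real
  assumes "p \<ge> 0" "x \<ge> 0" "y \<ge> 0"
  shows "flat (sqrt p) * (sqrt x * sqrt y) = sqrt (x * y / p)"
  using assms by (auto simp: flat_def real_sqrt_mult real_sqrt_divide)

text \<open>Where \<open>mpow P (n + m) i k = 0\<close> both the flat and the quotient in HOL vanish, so the coefficient
  of \<open>U\<close> is the square root of the ratio in \<open>(\<star>)\<close> without exception.\<close>
lemma Umap_eq_infsum:
  assumes P: "stochastic P"
  shows "Umap P n m A B i k =
    infsum (\<lambda>j. complex_of_real (sqrt (mpow P n i j * mpow P m j k / mpow P (n + m) i k))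
                * (A i j * B j k)) UNIV"
proof -
  have "Umap P n m A B i k = infsum (\<lambda>j. complex_of_real (flat (sqrt (mpow P (n + m) i k))) *
      ((complex_of_real (sqrt (mpow P n i j)) * A i j) * (complex_of_real (sqrt (mpow P m j k)) * B j k))) UNIV"
    unfolding Umap_def by (rule infsum_cmult_right'[symmetric])
  also have "\<dots> = infsum (\<lambda>j. complex_of_real (flat (sqrt (mpow P (n + m) i k)) *
      (sqrt (mpow P n i j) * sqrt (mpow P m j k))) * (A i j * B j k)) UNIV"
    by (simp only: of_real_mult ac_simps)
  also have "\<dots> = infsum (\<lambda>j. complex_of_real (sqrt (mpow P n i j * mpow P m j k / mpow P (n + m) i k))
                * (A i j * B j k)) UNIV"
    by (simp only: flat_sqrt_mult mpow_nonneg[OF P])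
  finally show ?thesis .
qed

lemma Umap_matrix_unit:
  assumes "stochastic P"
  shows "Umap P n m (\<lambda>x y. c1 * matrix_unit a b x y) (\<lambda>x y. c2 * matrix_unit b d x y) =
    (\<lambda>x y. complex_of_real (sqrt (mpow P n a b * mpow P m b d / mpow P (n + m) a d))
           * (c1 * c2) * matrix_unit a d x y)"
proof (intro ext)
  fix x y
  show "Umap P n m (\<lambda>x y. c1 * matrix_unit a b x y) (\<lambda>x y. c2 * matrix_unit b d x y) x y =
    complex_of_real (sqrt (mpow P n a b * mpow P m b d / mpow P (n + m) a d))
           * (c1 * c2) * matrix_unit a d x y"
    unfolding Umap_eq_infsum[OF assms]
    by (subst infsum_single_nonzero[where a=b]) (auto simp: matrix_unit_def)
qed

section \<open>*-automorphisms of \<open>\<ell>\<^sup>\<infinity>\<close>\<close>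

lemma pj_in_linf: "pj j \<in> linf"
  unfolding linf_def pj_def by (auto intro!: bdd_aboveI[where M=1])

lemma zero_in_linf: "(\<lambda>x. 0) \<in> linf"
  unfolding linf_def by (auto intro!: bdd_aboveI[where M=0])

lemma pj_eq_iff: "pj a = pj b \<longleftrightarrow> a = b"
  by (metis pj_def zero_neq_one)

lemma pj_neq_zero: "pj a \<noteq> (\<lambda>x. 0)"
  by (metis pj_def zero_neq_one)

lemma star_autD:
  assumes "star_aut \<rho>"
  shows star_aut_bij: "bij_betw \<rho> linf linf"
    and star_aut_smult: "\<And>f c. f \<in> linf \<Longrightarrow> \<rho> (\<lambda>x. c * f x) = (\<lambda>x. c * \<rho> f x)"
    and star_aut_mult: "\<And>f g. f \<in> linf \<Longrightarrow> g \<in> linf \<Longrightarrow> \<rho> (\<lambda>x. f x * g x) = (\<lambda>x. \<rho> f x * \<rho> g x)"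
  using assms unfolding star_aut_def by blast+

lemma star_aut_zero: "star_aut \<rho> \<Longrightarrow> \<rho> (\<lambda>x. 0) = (\<lambda>x. 0)"
  using star_aut_smult[OF _ zero_in_linf, of \<rho> 0] by simp

lemma star_aut_eq_iff: "star_aut \<rho> \<Longrightarrow> f \<in> linf \<Longrightarrow> g \<in> linf \<Longrightarrow> \<rho> f = \<rho> g \<longleftrightarrow> f = g"
  using star_aut_bij unfolding bij_betw_def inj_on_def by blast

lemma star_aut_inv:
  assumes "star_aut \<rho>" "f \<in> linf"
  shows "inv_into linf \<rho> f \<in> linf" "\<rho> (inv_into linf \<rho> f) = f"
  using star_aut_bij[OF assms(1)] assms(2)
  by (simp_all add: bij_betw_def inv_into_into f_inv_into_f)

text \<open>With \<open>r = \<rho>\<^sup>-\<^sup>1(p\<^sub>k)\<close>, compute \<open>\<rho>(r p\<^sub>j)\<close> once by multiplicativity and once using \<open>r p\<^sub>j = r(j) p\<^sub>j\<close>.\<close>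
lemma star_aut_inv_pj_coord:
  assumes "star_aut \<rho>"
  shows "pj k x * \<rho> (pj j) x = inv_into linf \<rho> (pj k) j * \<rho> (pj j) x"
proof -
  define r where "r = inv_into linf \<rho> (pj k)"
  have r: "r \<in> linf" "\<rho> r = pj k"
    using star_aut_inv[OF assms pj_in_linf] by (simp_all add: r_def)
  have "(\<lambda>x. pj k x * \<rho> (pj j) x) = \<rho> (\<lambda>x. r x * pj j x)"
    using star_aut_mult[OF assms r(1) pj_in_linf] r(2) by simp
  also have "(\<lambda>x. r x * pj j x) = (\<lambda>x. r j * pj j x)"
    by (auto simp: pj_def)
  also have "\<rho> (\<lambda>x. r j * pj j x) = (\<lambda>x. r j * \<rho> (pj j) x)"
    by (rule star_aut_smult[OF assms pj_in_linf])
  finally have "(\<lambda>x. pj k x * \<rho> (pj j) x) = (\<lambda>x. r j * \<rho> (pj j) x)" .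
  then show ?thesis unfolding r_def by (rule fun_cong)
qed

lemma star_aut_pj_ex:
  assumes sa: "star_aut \<rho>"
  shows "\<exists>k. \<rho> (pj j) = pj k"
proof -
  define q where "q = \<rho> (pj j)"
  have "q \<noteq> (\<lambda>x. 0)"
    using star_aut_eq_iff[OF sa pj_in_linf zero_in_linf] star_aut_zero[OF sa] pj_neq_zero
    by (simp add: q_def)
  then obtain k where k: "q k \<noteq> 0" by auto
  have "inv_into linf \<rho> (pj k) j = 1"
    using star_aut_inv_pj_coord[OF sa, of k k j] k by (simp add: q_def pj_def)
  then have supp: "pj k x * q x = q x" for x
    using star_aut_inv_pj_coord[OF sa, of k x j] by (simp add: q_def)
  have "(\<lambda>x. pj j x * pj j x) = pj j"
    by (auto simp: pj_def)
  then have "(\<lambda>x. q x * q x) = q"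
    using star_aut_mult[OF sa pj_in_linf pj_in_linf, of j j] by (simp add: q_def)
  then have "q k * q k = q k" by (rule fun_cong)
  then have "q k = 1" using k by simp
  have "q = pj k"
  proof
    show "q x = pj k x" for x
      using supp[of x] \<open>q k = 1\<close> by (cases "x = k") (simp_all add: pj_def)
  qed
  then show ?thesis unfolding q_def by blast
qed

lemma star_aut_pj:
  assumes "star_aut \<rho>"
  shows "\<rho> (pj j) = pj (sigma_of \<rho> j)"
proof -
  obtain k where k: "\<rho> (pj j) = pj k" using star_aut_pj_ex[OF assms] by blast
  then have "sigma_of \<rho> j = k"
    unfolding sigma_of_def by (rule the_equality) (simp add: k pj_eq_iff)
  with k show ?thesis by simp
qed

lemma bij_sigma_of:
  assumes sa: "star_aut \<rho>"
  shows "bij (sigma_of \<rho>)"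
proof (rule bijI)
  show "inj (sigma_of \<rho>)"
    by (rule injI)
       (metis star_aut_pj[OF sa] star_aut_eq_iff[OF sa pj_in_linf pj_in_linf] pj_eq_iff)
  have "k \<in> range (sigma_of \<rho>)" for k
  proof -
    define r where "r = inv_into linf \<rho> (pj k)"
    have "r \<noteq> (\<lambda>x. 0)"
      using star_aut_inv[OF sa pj_in_linf] star_aut_zero[OF sa] pj_neq_zero
      by (metis r_def)
    then obtain j where j: "r j \<noteq> 0" by auto
    have "pj (sigma_of \<rho> j) (sigma_of \<rho> j) = 1"
      by (simp add: pj_def)
    then have "pj k (sigma_of \<rho> j) = r j"
      using star_aut_inv_pj_coord[OF sa, of k "sigma_of \<rho> j" j]
      by (simp add: star_aut_pj[OF sa] r_def)
    with j have "sigma_of \<rho> j = k"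
      by (auto simp: pj_def split: if_splits)
    then show ?thesis by blast
  qed
  then show "surj (sigma_of \<rho>)" by blast
qed

section \<open>From a unitary isomorphism to \<open>(\<star>)\<close>\<close>

lemma rho_unitary_isoD:
  assumes "rho_unitary_iso P Q \<rho> V" "n \<ge> 1"
  shows rho_unitary_iso_image: "V n ` arv P n = arv Q n"
    and rho_unitary_iso_smult: "\<And>A c. A \<in> arv P n \<Longrightarrow> V n (\<lambda>i j. c * A i j) = (\<lambda>i j. c * V n A i j)"
    and rho_unitary_iso_bimod: "\<And>a b A. a \<in> linf \<Longrightarrow> b \<in> linf \<Longrightarrow> A \<in> arv P n \<Longrightarrow>
                     V n (bimod a A b) = bimod (\<rho> a) (V n A) (\<rho> b)"
    and rho_unitary_iso_ip: "\<And>A B. A \<in> arv P n \<Longrightarrow> B \<in> arv P n \<Longrightarrow>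
                     inv_into linf \<rho> (arv_ip (V n A) (V n B)) = arv_ip A B"
  using assms unfolding rho_unitary_iso_def by blast+

lemma rho_unitary_iso_Umap:
  assumes "rho_unitary_iso P Q \<rho> V" "n \<ge> 1" "m \<ge> 1" "A \<in> arv P n" "B \<in> arv P m"
  shows "V (n + m) (Umap P n m A B) = Umap Q n m (V n A) (V m B)"
  using assms unfolding rho_unitary_iso_def by blast

lemma rho_unitary_iso_zero:
  assumes "rho_unitary_iso P Q \<rho> V" "n \<ge> 1"
  shows "V n (\<lambda>i j. 0) = (\<lambda>i j. 0)"
  using rho_unitary_iso_smult[OF assms zero_in_arv, of 0] by simp

lemma arv_ip_scaled_matrix_unit:
  "arv_ip (\<lambda>i j. c * matrix_unit a b i j) (\<lambda>i j. c * matrix_unit a b i j) = (\<lambda>x. cnj c * c * pj b x)"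
proof
  show "arv_ip (\<lambda>i j. c * matrix_unit a b i j) (\<lambda>i j. c * matrix_unit a b i j) x = cnj c * c * pj b x" for x
    unfolding arv_ip_def
    by (subst infsum_single_nonzero[where a=a]) (auto simp: matrix_unit_def pj_def)
qed

lemma rho_unitary_iso_matrix_unit:
  assumes sa: "star_aut \<rho>" and V: "rho_unitary_iso P Q \<rho> V" and n: "n \<ge> 1"
    and ab: "mpow P n a b \<noteq> 0"
  shows "\<exists>c. cmod c = 1 \<and>
    V n (matrix_unit a b) = (\<lambda>i j. c * matrix_unit (sigma_of \<rho> a) (sigma_of \<rho> b) i j)"
proof -
  define \<sigma> where "\<sigma> = sigma_of \<rho>"
  define c where "c = V n (matrix_unit a b) (\<sigma> a) (\<sigma> b)"
  have e: "matrix_unit a b \<in> arv P n" by (rule matrix_unit_in_arv[OF ab])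
  have "V n (matrix_unit a b) = bimod (pj (\<sigma> a)) (V n (matrix_unit a b)) (pj (\<sigma> b))"
    using rho_unitary_iso_bimod[OF V n pj_in_linf[of a] pj_in_linf[of b] e]
    by (simp add: star_aut_pj[OF sa] \<sigma>_def bimod_pj_matrix_unit)
  then have Ve: "V n (matrix_unit a b) = (\<lambda>i j. c * matrix_unit (\<sigma> a) (\<sigma> b) i j)"
    by (simp add: bimod_pj_pj c_def)
  have "arv_ip (matrix_unit a b) (matrix_unit a b) = pj b"
    using arv_ip_scaled_matrix_unit[of 1 a b] by simp
  then have "inv_into linf \<rho> (\<lambda>x. cnj c * c * pj (\<sigma> b) x) = pj b"
    using rho_unitary_iso_ip[OF V n e e] by (simp add: Ve arv_ip_scaled_matrix_unit)
  moreover have "(\<lambda>x. cnj c * c * pj (\<sigma> b) x) \<in> linf"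
    unfolding linf_def pj_def by (auto intro!: bdd_aboveI[where M="cmod (cnj c * c)"])
  ultimately have "(\<lambda>x. cnj c * c * pj (\<sigma> b) x) = \<rho> (pj b)"
    using star_aut_inv(2)[OF sa] by metis
  then have "(\<lambda>x. cnj c * c * pj (\<sigma> b) x) = pj (\<sigma> b)"
    by (simp add: star_aut_pj[OF sa] \<sigma>_def)
  from fun_cong[OF this, of "\<sigma> b"] have "c * cnj c = 1"
    by (simp add: pj_def mult.commute)
  then have "(cmod c)\<^sup>2 = 1"
    by (metis complex_mod_mult_cnj norm_one)
  then have "cmod c = 1"
    using norm_ge_zero[of c] by (simp add: power2_eq_1_iff)
  with Ve show ?thesis unfolding \<sigma>_def by blast
qed

lemma rho_unitary_iso_scaled_matrix_unit_norm:
  assumes sa: "star_aut \<rho>" and V: "rho_unitary_iso P Q \<rho> V" and n: "n \<ge> 1"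
    and ab: "c \<noteq> 0 \<Longrightarrow> mpow P n a b \<noteq> 0"
  shows "cmod (V n (\<lambda>i j. c * matrix_unit a b i j) (sigma_of \<rho> a) (sigma_of \<rho> b)) = cmod c"
proof (cases "c = 0")
  case True
  then show ?thesis using rho_unitary_iso_zero[OF V n] by simp
next
  case False
  then obtain c' where "cmod c' = 1"
    "V n (matrix_unit a b) = (\<lambda>i j. c' * matrix_unit (sigma_of \<rho> a) (sigma_of \<rho> b) i j)"
    using rho_unitary_iso_matrix_unit[OF sa V n ab] by blast
  moreover have "V n (\<lambda>i j. c * matrix_unit a b i j) = (\<lambda>i j. c * V n (matrix_unit a b) i j)"
    by (rule rho_unitary_iso_smult[OF V n matrix_unit_in_arv[OF ab[OF False]]])
  ultimately show ?thesis
    by (simp add: matrix_unit_def norm_mult)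
qed

lemma rho_unitary_iso_pos_iff:
  assumes sP: "stochastic P" and sQ: "stochastic Q" and sa: "star_aut \<rho>"
    and V: "rho_unitary_iso P Q \<rho> V" and n: "n \<ge> 1"
  shows "mpow P n i j > 0 \<longleftrightarrow> mpow Q n (sigma_of \<rho> i) (sigma_of \<rho> j) > 0"
proof
  assume "mpow P n i j > 0"
  then have ij: "mpow P n i j \<noteq> 0" by simp
  then obtain c where "cmod c = 1"
    and Ve: "V n (matrix_unit i j) = (\<lambda>a b. c * matrix_unit (sigma_of \<rho> i) (sigma_of \<rho> j) a b)"
    using rho_unitary_iso_matrix_unit[OF sa V n] by blast
  moreover have "V n (matrix_unit i j) \<in> arv Q n"
    using rho_unitary_iso_image[OF V n] matrix_unit_in_arv[OF ij] by blast
  moreover have "V n (matrix_unit i j) (sigma_of \<rho> i) (sigma_of \<rho> j) \<noteq> 0"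
    using \<open>cmod c = 1\<close> unfolding Ve by (auto simp: matrix_unit_def)
  ultimately have "mpow Q n (sigma_of \<rho> i) (sigma_of \<rho> j) \<noteq> 0"
    unfolding arv_def by blast
  then show "mpow Q n (sigma_of \<rho> i) (sigma_of \<rho> j) > 0"
    using mpow_nonneg[OF sQ] by (simp add: order_less_le)
next
  assume "mpow Q n (sigma_of \<rho> i) (sigma_of \<rho> j) > 0"
  then have "matrix_unit (sigma_of \<rho> i) (sigma_of \<rho> j) \<in> V n ` arv P n"
    unfolding rho_unitary_iso_image[OF V n] by (intro matrix_unit_in_arv) simp
  then obtain A where A: "matrix_unit (sigma_of \<rho> i) (sigma_of \<rho> j) = V n A" "A \<in> arv P n"
    by (rule imageE)
  have supp: "A i j \<noteq> 0 \<Longrightarrow> mpow P n i j \<noteq> 0"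
    using A(2) by (auto simp: arv_def)
  have "V n (\<lambda>a b. A i j * matrix_unit i j a b) = V n (bimod (pj i) A (pj j))"
    by (simp add: bimod_pj_pj)
  also have "\<dots> = matrix_unit (sigma_of \<rho> i) (sigma_of \<rho> j)"
    using rho_unitary_iso_bimod[OF V n pj_in_linf pj_in_linf A(2)]
    by (simp only: A(1)[symmetric] star_aut_pj[OF sa] bimod_pj_matrix_unit)
  finally have "V n (\<lambda>a b. A i j * matrix_unit i j a b) (sigma_of \<rho> i) (sigma_of \<rho> j) = 1"
    by (simp add: matrix_unit_def)
  then have "cmod (A i j) = 1"
    using rho_unitary_iso_scaled_matrix_unit_norm[OF sa V n supp] by (metis norm_one)
  then have "mpow P n i j \<noteq> 0"
    using supp by force
  then show "mpow P n i j > 0"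
    using mpow_nonneg[OF sP] by (simp add: order_less_le)
qed

lemma rho_unitary_iso_ratio:
  assumes sP: "stochastic P" and sQ: "stochastic Q" and sa: "star_aut \<rho>"
    and V: "rho_unitary_iso P Q \<rho> V" and n: "n \<ge> 1" and m: "m \<ge> 1"
    and pos: "mpow P n i j * mpow P m j k > 0"
  shows "mpow P n i j * mpow P m j k / mpow P (n + m) i k =
    mpow Q n (sigma_of \<rho> i) (sigma_of \<rho> j) * mpow Q m (sigma_of \<rho> j) (sigma_of \<rho> k)
      / mpow Q (n + m) (sigma_of \<rho> i) (sigma_of \<rho> k)"
    (is "?rP = ?rQ")
proof -
  define \<sigma> where "\<sigma> = sigma_of \<rho>"
  have ij: "mpow P n i j \<noteq> 0" and jk: "mpow P m j k \<noteq> 0"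
    using pos by auto
  obtain c1 where c1: "cmod c1 = 1"
    "V n (matrix_unit i j) = (\<lambda>x y. c1 * matrix_unit (\<sigma> i) (\<sigma> j) x y)"
    using rho_unitary_iso_matrix_unit[OF sa V n ij] \<sigma>_def by blast
  obtain c2 where c2: "cmod c2 = 1"
    "V m (matrix_unit j k) = (\<lambda>x y. c2 * matrix_unit (\<sigma> j) (\<sigma> k) x y)"
    using rho_unitary_iso_matrix_unit[OF sa V m jk] \<sigma>_def by blast
  have "Umap P n m (matrix_unit i j) (matrix_unit j k) =
      (\<lambda>x y. complex_of_real (sqrt ?rP) * matrix_unit i k x y)"
    using Umap_matrix_unit[OF sP, of n m 1 i j 1 k] by simp
  moreover have "Umap Q n m (V n (matrix_unit i j)) (V m (matrix_unit j k)) =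
      (\<lambda>x y. complex_of_real (sqrt ?rQ) * (c1 * c2) * matrix_unit (\<sigma> i) (\<sigma> k) x y)"
    unfolding c1(2) c2(2) Umap_matrix_unit[OF sQ] \<sigma>_def ..
  ultimately have "V (n + m) (\<lambda>x y. complex_of_real (sqrt ?rP) * matrix_unit i k x y) (\<sigma> i) (\<sigma> k)
      = complex_of_real (sqrt ?rQ) * (c1 * c2)"
    using rho_unitary_iso_Umap[OF V n m matrix_unit_in_arv[OF ij] matrix_unit_in_arv[OF jk]]
    by (simp add: matrix_unit_def)
  moreover have "cmod (V (n + m) (\<lambda>x y. complex_of_real (sqrt ?rP) * matrix_unit i k x y) (\<sigma> i) (\<sigma> k))
      = cmod (complex_of_real (sqrt ?rP))"
    unfolding \<sigma>_def using n by (intro rho_unitary_iso_scaled_matrix_unit_norm[OF sa V]) auto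
  ultimately have "\<bar>sqrt ?rP\<bar> = \<bar>sqrt ?rQ\<bar>"
    using c1(1) c2(1) by (simp add: norm_mult)
  moreover have "?rP \<ge> 0" "?rQ \<ge> 0"
    using mpow_nonneg[OF sP] mpow_nonneg[OF sQ] by simp_all
  ultimately show ?thesis by simp
qed

lemma star_cond_of_rho_unitary_iso:
  assumes sP: "stochastic P" and sQ: "stochastic Q" and sa: "star_aut \<rho>"
    and V: "rho_unitary_iso P Q \<rho> V"
  shows "star_cond P Q (sigma_of \<rho>)"
proof -
  define \<sigma> where "\<sigma> = sigma_of \<rho>"
  have pos: "mpow Q n (\<sigma> i) (\<sigma> j) > 0" if "mpow P n i j > 0" for n i j
  proof (cases "n = 0")
    case True
    with that show ?thesis by (simp split: if_splits)
  next
    case False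
    with that show ?thesis
      using rho_unitary_iso_pos_iff[OF sP sQ sa V] \<sigma>_def by simp
  qed
  have ratio: "mpow P n i j * mpow P m j k / mpow P (n + m) i k =
      mpow Q n (\<sigma> i) (\<sigma> j) * mpow Q m (\<sigma> j) (\<sigma> k) / mpow Q (n + m) (\<sigma> i) (\<sigma> k)"
    if pp: "mpow P n i j * mpow P m j k > 0" for n m i j k
  proof -
    consider "n = 0" | "m = 0" | "n \<ge> 1" "m \<ge> 1" by linarith
    then show ?thesis
    proof cases
      case 1
      with pp have "i = j" "mpow P m j k > 0" by (simp_all split: if_splits)
      with 1 show ?thesis using pos[of m j k] by simp
    next
      case 2
      with pp have "j = k" "mpow P n i j > 0" by (simp_all split: if_splits)
      with 2 show ?thesis using pos[of n i j] by simp
    next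
      case 3
      then show ?thesis
        using rho_unitary_iso_ratio[OF sP sQ sa V _ _ pp] \<sigma>_def by simp
    qed
  qed
  have "P i j > 0 \<longleftrightarrow> Q (\<sigma> i) (\<sigma> j) > 0" for i j
    using rho_unitary_iso_pos_iff[OF sP sQ sa V order_refl] by (simp only: mpow_1 \<sigma>_def)
  with bij_sigma_of[OF sa] ratio show ?thesis
    unfolding star_cond_def \<sigma>_def by blast
qed

section \<open>From \<open>(\<star>)\<close> to a unitary isomorphism\<close>

definition permute_matrix :: "('a \<Rightarrow> 'a) \<Rightarrow> ('a \<Rightarrow> 'a \<Rightarrow> complex) \<Rightarrow> 'a \<Rightarrow> 'a \<Rightarrow> complex" where
  "permute_matrix \<sigma> A = (\<lambda>i j. A (inv \<sigma> i) (inv \<sigma> j))"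

lemma permute_matrix_image:
  assumes "bij \<sigma>" and supp: "\<And>i j. mpow P n i j = 0 \<longleftrightarrow> mpow Q n (\<sigma> i) (\<sigma> j) = 0"
  shows "permute_matrix \<sigma> ` arv P n = arv Q n"
proof
  show "permute_matrix \<sigma> ` arv P n \<subseteq> arv Q n"
  proof (rule image_subsetI)
    fix A assume A: "A \<in> arv P n"
    show "permute_matrix \<sigma> A \<in> arv Q n"
      unfolding permute_matrix_def
      by (rule arv_reindex[OF bij_imp_bij_inv[OF \<open>bij \<sigma>\<close>] _ A])
         (simp add: supp surj_f_inv_f[OF bij_is_surj[OF \<open>bij \<sigma>\<close>]])
  qed
  show "arv Q n \<subseteq> permute_matrix \<sigma> ` arv P n"
  proof
    fix B assume B: "B \<in> arv Q n"
    have "(\<lambda>i j. B (\<sigma> i) (\<sigma> j)) \<in> arv P n"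
      by (rule arv_reindex[OF \<open>bij \<sigma>\<close> _ B]) (simp add: supp)
    moreover have "B = permute_matrix \<sigma> (\<lambda>i j. B (\<sigma> i) (\<sigma> j))"
      by (simp add: permute_matrix_def surj_f_inv_f[OF bij_is_surj[OF \<open>bij \<sigma>\<close>]])
    ultimately show "B \<in> permute_matrix \<sigma> ` arv P n" by blast
  qed
qed

lemma permute_matrix_bimod:
  "permute_matrix \<sigma> (bimod a A b) = bimod (rho_of \<sigma> a) (permute_matrix \<sigma> A) (rho_of \<sigma> b)"
  by (simp add: permute_matrix_def bimod_def rho_of_def)

lemma arv_ip_permute_matrix:
  assumes "bij \<sigma>"
  shows "arv_ip (permute_matrix \<sigma> A) (permute_matrix \<sigma> B) = rho_of \<sigma> (arv_ip A B)"
proof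
  have inv: "bij_betw (inv \<sigma>) UNIV UNIV"
    using bij_imp_bij_inv[OF assms] by (simp add: bij_def bij_betw_def)
  show "arv_ip (permute_matrix \<sigma> A) (permute_matrix \<sigma> B) x = rho_of \<sigma> (arv_ip A B) x" for x
    unfolding arv_ip_def permute_matrix_def rho_of_def
    using infsum_reindex_bij_betw[OF inv, of "\<lambda>i. cnj (A i (inv \<sigma> x)) * B i (inv \<sigma> x)"] by simp
qed

lemma inj_rho_of:
  assumes "bij \<sigma>"
  shows "inj (rho_of \<sigma>)"
proof (rule injI)
  fix f g :: "'a \<Rightarrow> complex" assume "rho_of \<sigma> f = rho_of \<sigma> g"
  then have "f (inv \<sigma> (\<sigma> x)) = g (inv \<sigma> (\<sigma> x))" for x
    unfolding rho_of_def by (metis comp_apply)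
  then show "f = g"
    by (simp add: inv_f_f[OF bij_is_inj[OF assms]] ext)
qed

lemma Umap_permute_matrix:
  assumes sP: "stochastic P" and sQ: "stochastic Q" and sc: "star_cond P Q \<sigma>"
    and A: "A \<in> arv P n" and B: "B \<in> arv P m"
  shows "permute_matrix \<sigma> (Umap P n m A B) = Umap Q n m (permute_matrix \<sigma> A) (permute_matrix \<sigma> B)"
proof (intro ext)
  fix a c
  have "bij \<sigma>" using sc by (simp add: star_cond_def)
  have inv: "bij_betw (inv \<sigma>) UNIV UNIV"
    using bij_imp_bij_inv[OF \<open>bij \<sigma>\<close>] by (simp add: bij_def bij_betw_def)
  define i where "i = inv \<sigma> a"
  define k where "k = inv \<sigma> c"
  have coeff: "complex_of_real (sqrt (mpow P n i j * mpow P m j k / mpow P (n + m) i k)) * (A i j * B j k)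
      = complex_of_real (sqrt (mpow Q n a (\<sigma> j) * mpow Q m (\<sigma> j) c / mpow Q (n + m) a c))
        * (A i j * B j k)" for j
  proof (cases "A i j * B j k = 0")
    case False
    then have "mpow P n i j \<noteq> 0" "mpow P m j k \<noteq> 0"
      using A B by (auto simp: arv_def)
    then have "mpow P n i j * mpow P m j k > 0"
      using mpow_nonneg[OF sP] by (simp add: order_less_le)
    then have "mpow P n i j * mpow P m j k / mpow P (n + m) i k =
        mpow Q n (\<sigma> i) (\<sigma> j) * mpow Q m (\<sigma> j) (\<sigma> k) / mpow Q (n + m) (\<sigma> i) (\<sigma> k)"
      using sc unfolding star_cond_def by blast
    then show ?thesis
      by (simp add: i_def k_def surj_f_inv_f[OF bij_is_surj[OF \<open>bij \<sigma>\<close>]])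
  qed simp
  have "permute_matrix \<sigma> (Umap P n m A B) a c = Umap P n m A B i k"
    by (simp add: permute_matrix_def i_def k_def)
  also have "\<dots> = infsum (\<lambda>j. complex_of_real (sqrt (mpow Q n a (\<sigma> j) * mpow Q m (\<sigma> j) c
      / mpow Q (n + m) a c)) * (A i j * B j k)) UNIV"
    by (simp add: Umap_eq_infsum[OF sP] coeff)
  also have "\<dots> = Umap Q n m (permute_matrix \<sigma> A) (permute_matrix \<sigma> B) a c"
    unfolding Umap_eq_infsum[OF sQ] permute_matrix_def i_def k_def
    using infsum_reindex_bij_betw[OF inv, of "\<lambda>j. complex_of_real (sqrt (mpow Q n a (\<sigma> j)
      * mpow Q m (\<sigma> j) c / mpow Q (n + m) a c)) * (A (inv \<sigma> a) j * B j (inv \<sigma> c))"]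
    by (simp add: surj_f_inv_f[OF bij_is_surj[OF \<open>bij \<sigma>\<close>]])
  finally show "permute_matrix \<sigma> (Umap P n m A B) a c
      = Umap Q n m (permute_matrix \<sigma> A) (permute_matrix \<sigma> B) a c" .
qed

lemma rho_unitary_iso_of_star_cond:
  assumes sP: "stochastic P" and sQ: "stochastic Q" and sc: "star_cond P Q \<sigma>"
  shows "rho_unitary_iso P Q (rho_of \<sigma>) (\<lambda>_. permute_matrix \<sigma>)"
proof -
  have "bij \<sigma>" and "\<And>i j. P i j > 0 \<longleftrightarrow> Q (\<sigma> i) (\<sigma> j) > 0"
    using sc by (simp_all add: star_cond_def)
  then have "mpow P n i j = 0 \<longleftrightarrow> mpow Q n (\<sigma> i) (\<sigma> j) = 0" for n i j
    using mpow_pos_iff_of_pos_iff[OF sP sQ, of \<sigma> n i j]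
      mpow_nonneg[OF sP, of n i j] mpow_nonneg[OF sQ, of n "\<sigma> i" "\<sigma> j"]
    by (smt (verit))
  then have image: "permute_matrix \<sigma> ` arv P n = arv Q n" for n
    by (rule permute_matrix_image[OF \<open>bij \<sigma>\<close>])
  have ip: "inv_into linf (rho_of \<sigma>) (arv_ip (permute_matrix \<sigma> A) (permute_matrix \<sigma> B)) = arv_ip A B"
    if "A \<in> arv P n" "B \<in> arv P n" for n A B
    using inv_into_f_f[OF inj_on_subset[OF inj_rho_of[OF \<open>bij \<sigma>\<close>] subset_UNIV] arv_ip_in_linf[OF that]]
    by (simp add: arv_ip_permute_matrix[OF \<open>bij \<sigma>\<close>])
  have linear: "permute_matrix \<sigma> (\<lambda>i j. A i j + B i j) = (\<lambda>i j. permute_matrix \<sigma> A i j + permute_matrix \<sigma> B i j)"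
    "permute_matrix \<sigma> (\<lambda>i j. c * A i j) = (\<lambda>i j. c * permute_matrix \<sigma> A i j)" for A B c
    by (simp_all add: permute_matrix_def)
  show ?thesis
    unfolding rho_unitary_iso_def
    by (simp add: image linear ip permute_matrix_bimod Umap_permute_matrix[OF sP sQ sc])
qed

theorem mainTheorem8:
  fixes P Q :: "'a::countable \<Rightarrow> 'a \<Rightarrow> real"
  assumes "stochastic P" and "stochastic Q"
  shows "(\<forall>\<rho> V. star_aut \<rho> \<and> rho_unitary_iso P Q \<rho> V \<longrightarrow> star_cond P Q (sigma_of \<rho>))
       \<and> (\<forall>\<sigma>. star_cond P Q \<sigma> \<longrightarrow> (\<exists>V. rho_unitary_iso P Q (rho_of \<sigma>) V))"
  using star_cond_of_rho_unitary_iso[OF assms] rho_unitary_iso_of_star_cond[OF assms] by blast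

end
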